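(* Let $g$ and $s$ be integers with $s \geq -1$ and $g \geq 4s + 14$, and put $d = g - s$. Then $d^2 - 6(2g-2)$ is not a perfect square. *)

theory Defs
  imports Main
begin

end

theory Submission
  imports Defs
begin

text \<open>With \<open>x = d - 6\<close> and \<open>g = d + s\<close>, a square \<open>k\<^sup>2 = d\<^sup>2 - 6(2g - 2)\<close> means
  \<open>x\<^sup>2 - k\<^sup>2 = 12(s + 2)\<close>. The factors \<open>u = |x| - |k|\<close> and \<open>v = |x| + |k|\<close> have the same parity
  and a positive even product, so both are at least 2; then \<open>(u - 2)(v - 2) \<ge> 0\<close> bounds their
  sum \<open>2|x|\<close> by \<open>uv/2 + 2 = 6(s + 2) + 2\<close>, so \<open>d - 6 \<le> 3s + 7\<close>, contradicting \<open>g \<ge> 4s + 14\<close>.\<close>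

lemma square_diff_eq_four_mult_imp_abs_le:
  fixes x k m :: int
  assumes diff: "x\<^sup>2 - k\<^sup>2 = 4 * m" and "m > 0"
  shows "\<bar>x\<bar> \<le> m + 1"
proof -
  define u where "u = \<bar>x\<bar> - \<bar>k\<bar>"
  define v where "v = \<bar>x\<bar> + \<bar>k\<bar>"
  have uv: "u * v = 4 * m"
    using diff unfolding u_def v_def by (simp add: power2_eq_square algebra_simps abs_mult_self_eq)
  with \<open>m > 0\<close> have "u * v > 0" by simp
  moreover have "v \<ge> 0" unfolding v_def by simp
  ultimately have pos: "u > 0" "v > 0"
    by (auto simp: zero_less_mult_iff)
  have "v = u + 2 * \<bar>k\<bar>" unfolding u_def v_def by simp
  then have "even v \<longleftrightarrow> even u" by simp
  moreover have "even (u * v)" using uv by simp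
  ultimately have "even u" "even v" by auto
  with pos have "u \<ge> 2" "v \<ge> 2"
    by (auto elim!: evenE)
  then have "(u - 2) * (v - 2) \<ge> 0" by simp
  with uv have "u + v \<le> 2 * m + 2" by (simp add: algebra_simps)
  then show ?thesis unfolding u_def v_def by simp
qed

theorem lemma2p1:
  fixes g s d :: int
  assumes "s \<ge> -1" and "g \<ge> 4 * s + 14" and "d = g - s"
  shows "\<not> (\<exists>k::int. k ^ 2 = d ^ 2 - 6 * (2 * g - 2))"
proof
  assume "\<exists>k::int. k ^ 2 = d ^ 2 - 6 * (2 * g - 2)"
  then obtain k :: int where k: "k ^ 2 = d ^ 2 - 6 * (2 * g - 2)" ..
  have "k\<^sup>2 = d\<^sup>2 - 6 * (2 * (d + s) - 2)"
    using k \<open>d = g - s\<close> by simp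
  then have "(d - 6)\<^sup>2 - k\<^sup>2 = 4 * (3 * (s + 2))"
    by (simp add: power2_eq_square algebra_simps)
  then have "\<bar>d - 6\<bar> \<le> 3 * (s + 2) + 1"
    using \<open>s \<ge> -1\<close> by (intro square_diff_eq_four_mult_imp_abs_le) simp_all
  with assms show False by simp
qed

end
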